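(* Let $G$ be an ordered graph with $|V(G)|\le n$, let $h\ge 1$ be a real number, and let $e\in E(G)$ satisfy $\mathrm{h}_G(e)\ge 21h\log n$. Then there is a subgraph $H\subseteq G$ with average degree $\overline{d}(H)\ge h$ such that for each $f\in E(H)$ there is an increasing trail $T$ in $G$ with the following properties: (1) $T$ starts with $e$ and ends with $f$; (2) $T$ has length at most $2+\log n$; (3) $\mathrm{h}_G(g)\ge \mathrm{h}_G(e)-7h(\log n+2)$ for every edge $g\in E(T)$.
   Context: An ordered graph is a finite simple graph $G$ equipped with a total order $\le_G$ on $E(G)$ and a total order $\le^V_G$ on $V(G)$. Let $\mathbb N=\{1,2,\dots\}$. Define $\preceq_{\mathrm{lex}}$ on $\mathbb N\times V(G)$ by $(i,v)\preceq_{\mathrm{lex}}(i',v')$ iff $i<i'$, or $i=i'$ and $v\le^V_G v'$. The height table $\mathrm{HT}(G)$ is a partially filled array indexed by $\mathbb N\times V(G)$, built by going through all $(i,v)$ in $\preceq_{\mathrm{lex}}$-increasing order and setting the entry at $(i,v)$ to be the $\le_G$-largest edge containing $v$ not yet entered into the table (blank if none remain). Every edge is entered exactly once; $\mathrm{h}_G(e)$ denotes the row of $\mathrm{HT}(G)$ containing $e$. An increasing trail is a walk with a specified direction that does not repeat edges (vertices may repeat) and whose consecutive edges are $\le_G$-increasing; its length is its number of edges. $\overline{d}(H)=2|E(H)|/|V(H)|$. Logarithms are base 2. *)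

theory Defs
  imports Complex_Main
begin

definition simple_graph :: "'a set \<Rightarrow> 'a set set \<Rightarrow> bool" where
  "simple_graph V E \<longleftrightarrow> finite V \<and>
     (\<forall>e\<in>E. \<exists>u v. u \<in> V \<and> v \<in> V \<and> u \<noteq> v \<and> e = {u, v})"

definition ordered_graph ::
  "'a set \<Rightarrow> 'a set set \<Rightarrow> ('a set \<times> 'a set) set \<Rightarrow> ('a \<times> 'a) set \<Rightarrow> bool" where
  "ordered_graph V E leE leV \<longleftrightarrow> simple_graph V E \<and>
     linear_order_on E leE \<and> linear_order_on V leV"

definition vlist :: "'a set \<Rightarrow> ('a \<times> 'a) set \<Rightarrow> 'a list" where
  "vlist V leV = (THE vs. set vs = V \<and> sorted_wrt (\<lambda>u w. u \<noteq> w \<and> (u, w) \<in> leV) vs)"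

text \<open>Process one cell (i,v) of the height table: remove from the set R of not yet
  entered edges the leE-largest edge containing v (if any).\<close>
definition ht_cell :: "('a set \<times> 'a set) set \<Rightarrow> 'a \<Rightarrow> 'a set set \<Rightarrow> 'a set set" where
  "ht_cell leE v R =
     (if \<exists>f\<in>R. v \<in> f
      then R - {THE f. f \<in> R \<and> v \<in> f \<and> (\<forall>g\<in>R. v \<in> g \<longrightarrow> (g, f) \<in> leE)}
      else R)"

fun ht_row :: "('a set \<times> 'a set) set \<Rightarrow> 'a list \<Rightarrow> 'a set set \<Rightarrow> 'a set set" where
  "ht_row leE [] R = R"
| "ht_row leE (v # vs) R = ht_row leE vs (ht_cell leE v R)"

fun ht_remaining ::
  "'a set \<Rightarrow> 'a set set \<Rightarrow> ('a set \<times> 'a set) set \<Rightarrow> ('a \<times> 'a) set \<Rightarrow> nat \<Rightarrow> 'a set set" where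
  "ht_remaining V E leE leV 0 = E"
| "ht_remaining V E leE leV (Suc i) = ht_row leE (vlist V leV) (ht_remaining V E leE leV i)"

text \<open>h_G(e): the row (rows numbered 1,2,...) of HT(G) containing e.\<close>
definition height ::
  "'a set \<Rightarrow> 'a set set \<Rightarrow> ('a set \<times> 'a set) set \<Rightarrow> ('a \<times> 'a) set \<Rightarrow> 'a set \<Rightarrow> nat" where
  "height V E leE leV e = (LEAST i. e \<notin> ht_remaining V E leE leV i)"

definition walk_edges :: "'a list \<Rightarrow> 'a set list" where
  "walk_edges ws = map (\<lambda>i. {ws ! i, ws ! Suc i}) [0..<length ws - 1]"

definition increasing_trail ::
  "'a set set \<Rightarrow> ('a set \<times> 'a set) set \<Rightarrow> 'a list \<Rightarrow> bool" where
  "increasing_trail E leE ws \<longleftrightarrow> length ws \<ge> 2 \<and> set (walk_edges ws) \<subseteq> E \<and>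
     distinct (walk_edges ws) \<and>
     (\<forall>i. Suc i < length (walk_edges ws) \<longrightarrow>
        (walk_edges ws ! i, walk_edges ws ! Suc i) \<in> leE)"

definition trail_length :: "'a list \<Rightarrow> nat" where
  "trail_length ws = length (walk_edges ws)"

definition subgraph :: "'a set \<Rightarrow> 'a set set \<Rightarrow> 'a set \<Rightarrow> 'a set set \<Rightarrow> bool" where
  "subgraph VH EH V E \<longleftrightarrow> VH \<subseteq> V \<and> EH \<subseteq> E \<and> (\<forall>f\<in>EH. f \<subseteq> VH)"

definition avg_degree :: "'a set \<Rightarrow> 'a set set \<Rightarrow> real" where
  "avg_degree VH EH = 2 * real (card EH) / real (card VH)"

end

theory Submission
  imports Defs
begin

text \<open>Put D = \<lceil>3h\<rceil> and grow increasing trails out of e one edge at a time; let W(s) be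
  the set of endpoints of such trails with s + 1 edges all of whose edges have height at least
  h(e) - sD. If such a trail ends at w with last edge f, then in each of the D rows of the
  height table preceding the row of f, the cell of w holds an edge larger than f, and these
  edges extend the trail. Hence the extending edges A(s) meet every vertex of W(s) at least
  D times, so |A(s)| \<ge> D |W(s)| / 2, while they only cover vertices of W(s) \<union> W(s + 1).
  If A(s) had average degree below h, this would force |W(s + 1)| > 2 |W(s)|. Since
  |W(0)| = 2 and every W(s) lies in V, this doubling cannot go on for log n steps, and the
  first A(s) where it fails is the required subgraph.\<close>

lemma linear_order_on_finite_has_max:
  assumes "linear_order_on X r" "finite S" "S \<noteq> {}" "S \<subseteq> X"
  shows "\<exists>m\<in>S. \<forall>x\<in>S. (x, m) \<in> r"
  using assms(2-4)
proof (induction S rule: finite_ne_induct)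
  case (singleton x)
  then show ?case using assms(1) by (auto simp: order_on_defs refl_on_def)
next
  case (insert x F)
  then obtain m where m: "m \<in> F" "\<forall>y\<in>F. (y, m) \<in> r" by auto
  have r: "refl_on X r" "trans r" "total_on X r"
    using assms(1) by (auto simp: order_on_defs)
  have "x \<in> X" "m \<in> X" using insert.prems m(1) by auto
  then consider "(x, m) \<in> r" | "(m, x) \<in> r"
    using r(1,3) unfolding total_on_def by (metis refl_onD)
  then show ?case
  proof cases
    case 1
    then show ?thesis using m by auto
  next
    case 2
    then have "\<forall>y\<in>insert x F. (y, x) \<in> r"
      using m(2) r(2) refl_onD[OF r(1) \<open>x \<in> X\<close>] by (auto dest: transD)
    then show ?thesis by blast
  qed
qed

lemma sorted_wrt_strict_unique:
  assumes "antisym r"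
    and "sorted_wrt (\<lambda>u w. u \<noteq> w \<and> (u, w) \<in> r) xs"
    and "sorted_wrt (\<lambda>u w. u \<noteq> w \<and> (u, w) \<in> r) ys"
    and "set xs = set ys"
  shows "xs = ys"
  using assms(2-4)
proof (induction xs arbitrary: ys)
  case Nil
  then show ?case by simp
next
  case (Cons x xs)
  then obtain y ys' where ys: "ys = y # ys'" by (cases ys) auto
  have x: "\<forall>z\<in>set xs. x \<noteq> z \<and> (x, z) \<in> r" "sorted_wrt (\<lambda>u w. u \<noteq> w \<and> (u, w) \<in> r) xs"
    using Cons.prems(1) by simp_all
  have y: "\<forall>z\<in>set ys'. y \<noteq> z \<and> (y, z) \<in> r" "sorted_wrt (\<lambda>u w. u \<noteq> w \<and> (u, w) \<in> r) ys'"
    using Cons.prems(2) ys by simp_all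
  have "x = y"
  proof (rule ccontr)
    assume "x \<noteq> y"
    then have "x \<in> set ys'" "y \<in> set xs" using Cons.prems(3) ys by auto
    then show False using x(1) y(1) antisymD[OF assms(1), of x y] by blast
  qed
  moreover have "x \<notin> set xs" "y \<notin> set ys'" using x(1) y(1) by auto
  ultimately have "set xs = set ys'" using Cons.prems(3) ys by auto
  then show ?case using Cons.IH[OF x(2) y(2)] ys \<open>x = y\<close> by simp
qed

lemma sorted_wrt_strict_exists:
  assumes "linear_order_on X r" "finite X"
  shows "\<exists>xs. set xs = X \<and> sorted_wrt (\<lambda>u w. u \<noteq> w \<and> (u, w) \<in> r) xs"
  using assms(2)
proof (induction X rule: finite_remove_induct)
  case empty
  then show ?case by simp
next
  case (remove A)
  obtain m where "m \<in> A" "\<forall>x\<in>A. (m, x) \<in> r"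
    using linear_order_on_finite_has_max[of X "r\<inverse>" A] remove.hyps assms(1) by auto
  moreover obtain xs where "set xs = A - {m}" "sorted_wrt (\<lambda>u w. u \<noteq> w \<and> (u, w) \<in> r) xs"
    using remove.IH \<open>m \<in> A\<close> by blast
  ultimately show ?case by (intro exI[of _ "m # xs"]) auto
qed

lemma set_vlist:
  assumes "linear_order_on V leV" "finite V"
  shows "set (vlist V leV) = V"
proof -
  let ?sorted = "\<lambda>vs. set vs = V \<and> sorted_wrt (\<lambda>u w. u \<noteq> w \<and> (u, w) \<in> leV) vs"
  have "antisym leV" using assms(1) by (simp add: order_on_defs)
  then have "\<exists>!vs. ?sorted vs"
    using sorted_wrt_strict_exists[OF assms] sorted_wrt_strict_unique[of leV]
    by (intro ex_ex1I) auto
  then show ?thesis unfolding vlist_def by (rule theI'[THEN conjunct1])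
qed

lemma simple_graph_edgeD:
  assumes "simple_graph V E" "g \<in> E"
  obtains a b where "a \<in> V" "b \<in> V" "a \<noteq> b" "g = {a, b}"
  using assms unfolding simple_graph_def by blast

lemma simple_graph_card_edge:
  assumes "simple_graph V E" "g \<in> E"
  shows "card g = 2"
  using assms by (auto elim: simple_graph_edgeD)

lemma simple_graph_edge_subset:
  assumes "simple_graph V E" "g \<in> E"
  shows "g \<subseteq> V"
  using assms by (auto elim: simple_graph_edgeD)

lemma simple_graph_finite_edges:
  assumes "simple_graph V E"
  shows "finite E"
proof -
  have "E \<subseteq> Pow V" using simple_graph_edge_subset[OF assms] by auto
  then show ?thesis using assms finite_subset unfolding simple_graph_def by blast
qed

lemma ht_cell_subset: "ht_cell leE v R \<subseteq> R"
  unfolding ht_cell_def by auto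

lemma ht_row_subset: "ht_row leE vs R \<subseteq> R"
  by (induction vs arbitrary: R) (auto dest: subsetD[OF ht_cell_subset])

lemma ht_remaining_antimono:
  "i \<le> j \<Longrightarrow> ht_remaining V E leE leV j \<subseteq> ht_remaining V E leE leV i"
  by (induction j) (auto simp: le_Suc_eq dest: subsetD[OF ht_row_subset])

lemma ht_cell_removes_max:
  assumes "linear_order_on E leE" "finite R" "R \<subseteq> E" "f \<in> R" "v \<in> f"
  obtains m where "ht_cell leE v R = R - {m}" "m \<in> R" "v \<in> m" "(f, m) \<in> leE"
proof -
  obtain m where m: "m \<in> R" "v \<in> m" "\<forall>g\<in>R. v \<in> g \<longrightarrow> (g, m) \<in> leE"
    using linear_order_on_finite_has_max[OF assms(1), of "{g\<in>R. v \<in> g}"] assms(2-5) by auto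
  have "(THE g. g \<in> R \<and> v \<in> g \<and> (\<forall>x\<in>R. v \<in> x \<longrightarrow> (x, g) \<in> leE)) = m"
    using m assms(1) by (intro the_equality) (auto simp: order_on_defs dest: antisymD)
  then have "ht_cell leE v R = R - {m}"
    unfolding ht_cell_def using m by auto
  then show ?thesis using that m assms(4,5) by blast
qed

lemma ht_row_removes_larger:
  assumes "linear_order_on E leE" "finite R" "R \<subseteq> E" "w \<in> set vs"
    and "f \<in> ht_row leE vs R" "w \<in> f"
  shows "\<exists>g\<in>R - ht_row leE vs R. w \<in> g \<and> (f, g) \<in> leE \<and> g \<noteq> f"
  using assms(2-5)
proof (induction vs arbitrary: R)
  case Nil
  then show ?case by simp
next
  case (Cons v vs)
  let ?C = "ht_cell leE v R"
  have cell: "?C \<subseteq> R" by (rule ht_cell_subset)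
  have f: "f \<in> ht_row leE vs ?C" using Cons.prems(4) by simp
  show ?case
  proof (cases "w \<in> set vs")
    case True
    have "finite ?C" "?C \<subseteq> E" using finite_subset[OF cell Cons.prems(1)] cell Cons.prems(2) by auto
    then obtain g where "g \<in> ?C - ht_row leE vs ?C" "w \<in> g" "(f, g) \<in> leE" "g \<noteq> f"
      using Cons.IH[OF _ _ True f] by blast
    then show ?thesis using cell by auto
  next
    case False
    then have "w = v" using Cons.prems(3) by simp
    have "f \<in> ?C" using f ht_row_subset by blast
    then obtain m where "?C = R - {m}" "m \<in> R" "v \<in> m" "(f, m) \<in> leE"
      using ht_cell_removes_max[OF assms(1) Cons.prems(1,2)] cell \<open>w \<in> f\<close> \<open>w = v\<close> by blast
    then show ?thesis
      using \<open>f \<in> ?C\<close> ht_row_subset[of leE vs ?C] \<open>w = v\<close> by auto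
  qed
qed

text \<open>The edge f is still unentered when the cell (i, w) is filled, so that cell receives an
  edge containing w that is at least f.\<close>
lemma exists_larger_edge_of_height:
  assumes graph: "ordered_graph V E leE leV" and "f \<in> E" "w \<in> f"
    and "1 \<le> i" "i < height V E leE leV f"
  shows "\<exists>g\<in>E. w \<in> g \<and> height V E leE leV g = i \<and> (f, g) \<in> leE \<and> g \<noteq> f"
proof -
  have simple: "simple_graph V E" and lin: "linear_order_on E leE" "linear_order_on V leV"
    using graph unfolding ordered_graph_def by auto
  define R where "R = ht_remaining V E leE leV (i - 1)"
  have "R \<subseteq> E" unfolding R_def using ht_remaining_antimono[of 0 "i - 1"] by simp
  then have "finite R" using simple_graph_finite_edges[OF simple] by (rule finite_subset)
  have "Suc (i - 1) = i" using \<open>1 \<le> i\<close> by simp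
  then have row: "ht_remaining V E leE leV i = ht_row leE (vlist V leV) R"
    unfolding R_def by (metis ht_remaining.simps(2))
  have "f \<in> ht_remaining V E leE leV i"
    using not_less_Least \<open>i < height V E leE leV f\<close> unfolding height_def by blast
  moreover have "w \<in> set (vlist V leV)"
    using set_vlist[OF lin(2)] simple simple_graph_edge_subset[OF simple \<open>f \<in> E\<close>] \<open>w \<in> f\<close>
    unfolding simple_graph_def by auto
  ultimately obtain g where g: "g \<in> R" "g \<notin> ht_remaining V E leE leV i"
      "w \<in> g" "(f, g) \<in> leE" "g \<noteq> f"
    using ht_row_removes_larger[OF lin(1) \<open>finite R\<close> \<open>R \<subseteq> E\<close> _ _ \<open>w \<in> f\<close>] row by auto
  have "height V E leE leV g = i"
    unfolding height_def
  proof (rule Least_equality)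
    show "g \<notin> ht_remaining V E leE leV i" by (fact g(2))
    show "i \<le> j" if "g \<notin> ht_remaining V E leE leV j" for j
      using that g(1) ht_remaining_antimono[of j "i - 1" V E leE leV] unfolding R_def
      by (cases "j \<le> i - 1") auto
  qed
  then show ?thesis using g \<open>R \<subseteq> E\<close> by auto
qed

lemma length_walk_edges [simp]: "length (walk_edges ws) = length ws - 1"
  unfolding walk_edges_def by simp

lemma nth_walk_edges: "i < length ws - 1 \<Longrightarrow> walk_edges ws ! i = {ws ! i, ws ! Suc i}"
  unfolding walk_edges_def by simp

lemma walk_edges_eq_Nil_iff [simp]: "walk_edges ws = [] \<longleftrightarrow> length ws \<le> 1"
  unfolding walk_edges_def by auto

lemma walk_edges_snoc:
  assumes "ws \<noteq> []"
  shows "walk_edges (ws @ [y]) = walk_edges ws @ [{last ws, y}]"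
proof (rule nth_equalityI)
  fix i assume "i < length (walk_edges (ws @ [y]))"
  then consider "i < length ws - 1" | "i = length ws - 1" using assms by fastforce
  then show "walk_edges (ws @ [y]) ! i = (walk_edges ws @ [{last ws, y}]) ! i"
    by cases (use assms in \<open>auto simp: nth_walk_edges nth_append last_conv_nth\<close>)
qed (use assms in simp)

lemma last_mem_last_walk_edge:
  assumes "2 \<le> length ws"
  shows "last ws \<in> last (walk_edges ws)"
proof -
  have "last (walk_edges ws) = walk_edges ws ! (length ws - 2)"
    using assms by (simp add: last_conv_nth numeral_2_eq_2)
  also have "\<dots> = {ws ! (length ws - 2), ws ! (length ws - 1)}"
    using assms by (simp add: nth_walk_edges Suc_diff_Suc numeral_2_eq_2)
  finally have "last (walk_edges ws) = {ws ! (length ws - 2), ws ! (length ws - 1)}" .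
  moreover have "last ws = ws ! (length ws - 1)"
    using assms by (intro last_conv_nth) auto
  ultimately show ?thesis by simp
qed

lemma increasing_trail_le_last:
  assumes "linear_order_on E leE" "increasing_trail E leE ws" "g \<in> set (walk_edges ws)"
  shows "(g, last (walk_edges ws)) \<in> leE"
proof -
  let ?es = "walk_edges ws"
  have "trans leE" "refl_on E leE" using assms(1) by (auto simp: order_on_defs)
  then have sorted: "sorted_wrt (\<lambda>a b. (a, b) \<in> leE) ?es"
    using assms(2) unfolding increasing_trail_def
    by (subst sorted_wrt_iff_nth_Suc_transp) (auto simp: transp_def dest: transD)
  obtain i where i: "i < length ?es" "g = ?es ! i"
    using assms(3) by (auto simp: in_set_conv_nth)
  then have last: "last ?es = ?es ! (length ?es - 1)" by (intro last_conv_nth) auto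
  show ?thesis
  proof (cases "i = length ?es - 1")
    case True
    have "g \<in> E" using assms(2,3) unfolding increasing_trail_def by auto
    then show ?thesis using True i last refl_onD[OF \<open>refl_on E leE\<close>] by simp
  next
    case False
    then show ?thesis using sorted_wrt_nth_less[OF sorted, of i "length ?es - 1"] i last by simp
  qed
qed

lemma increasing_trail_snoc:
  assumes "linear_order_on E leE" "increasing_trail E leE ws"
    and "{last ws, y} \<in> E" "(last (walk_edges ws), {last ws, y}) \<in> leE"
    and "{last ws, y} \<noteq> last (walk_edges ws)"
  shows "increasing_trail E leE (ws @ [y])"
proof -
  let ?g = "{last ws, y}" and ?es = "walk_edges ws"
  have "ws \<noteq> []" "?es \<noteq> []" using assms(2) unfolding increasing_trail_def by auto
  have "?g \<notin> set ?es"
    using increasing_trail_le_last[OF assms(1,2)] assms(1,4,5)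
    by (auto simp: order_on_defs dest: antisymD)
  moreover have "((?es @ [?g]) ! i, (?es @ [?g]) ! Suc i) \<in> leE"
    if "Suc i < length (?es @ [?g])" for i
  proof (cases "Suc i < length ?es")
    case True
    then show ?thesis using assms(2) unfolding increasing_trail_def by (simp add: nth_append)
  next
    case False
    then have "length ?es = Suc i" using that by simp
    then have "(?es @ [?g]) ! i = last ?es" "(?es @ [?g]) ! Suc i = ?g"
      using \<open>?es \<noteq> []\<close>
      by (simp_all add: nth_append last_conv_nth del: length_walk_edges walk_edges_eq_Nil_iff)
    then show ?thesis using assms(4) by simp
  qed
  ultimately show ?thesis
    using assms(2,3) walk_edges_snoc[OF \<open>ws \<noteq> []\<close>] unfolding increasing_trail_def by auto
qed

lemma double_counting_le:
  assumes "finite A" "finite W" "\<forall>g\<in>A. finite g \<and> card g \<le> k"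
    and "\<forall>w\<in>W. D \<le> card {g\<in>A. w \<in> g}"
  shows "D * card W \<le> k * card A"
proof -
  have "D * card W = (\<Sum>w\<in>W. D)" by simp
  also have "\<dots> \<le> (\<Sum>w\<in>W. card {g\<in>A. w \<in> g})"
    using assms(4) by (intro sum_mono) auto
  also have "\<dots> = (\<Sum>g\<in>A. card {w\<in>W. w \<in> g})"
    using sum.swap_restrict[OF assms(2,1), of "\<lambda>_ _. 1::nat" "\<lambda>w g. w \<in> g"] by simp
  also have "\<dots> \<le> (\<Sum>g\<in>A. k)"
  proof (rule sum_mono)
    fix g assume "g \<in> A"
    then have "card {w\<in>W. w \<in> g} \<le> card g" using assms(3) by (intro card_mono) auto
    then show "card {w\<in>W. w \<in> g} \<le> k" using assms(3) \<open>g \<in> A\<close> by auto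
  qed
  finally show ?thesis by (simp add: mult.commute)
qed

locale trail_growth =
  fixes V :: "'a set" and E :: "'a set set"
    and leE :: "('a set \<times> 'a set) set" and leV :: "('a \<times> 'a) set"
    and e :: "'a set" and D :: nat
  assumes graph: "ordered_graph V E leE leV" and e_edge: "e \<in> E"
begin

abbreviation hgt :: "'a set \<Rightarrow> nat" where
  "hgt \<equiv> height V E leE leV"

lemma simple: "simple_graph V E" and linear: "linear_order_on E leE"
  using graph unfolding ordered_graph_def by auto

lemma finite_V: "finite V"
  using simple unfolding simple_graph_def by simp

lemma two_le_card_V: "2 \<le> card V"
  using card_mono[OF finite_V simple_graph_edge_subset[OF simple e_edge]]
    simple_graph_card_edge[OF simple e_edge] by simp

definition admissible :: "nat \<Rightarrow> 'a list \<Rightarrow> bool" where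
  "admissible s ws \<longleftrightarrow> increasing_trail E leE ws \<and> hd (walk_edges ws) = e \<and>
     trail_length ws = Suc s \<and> (\<forall>g\<in>set (walk_edges ws). hgt e \<le> hgt g + s * D)"

definition frontier :: "nat \<Rightarrow> 'a set" where
  "frontier s = last ` Collect (admissible s)"

definition extension_edges :: "nat \<Rightarrow> 'a set set" where
  "extension_edges s = {g\<in>E. \<exists>ws. admissible s ws \<and> last ws \<in> g \<and>
     (last (walk_edges ws), g) \<in> leE \<and> g \<noteq> last (walk_edges ws) \<and> hgt e \<le> hgt g + Suc s * D}"

lemma admissible_last_edge:
  assumes "admissible s ws"
  shows "last (walk_edges ws) \<in> E" "last ws \<in> last (walk_edges ws)"
    "hgt e \<le> hgt (last (walk_edges ws)) + s * D"
proof -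
  have "2 \<le> length ws" "set (walk_edges ws) \<subseteq> E"
    using assms unfolding admissible_def increasing_trail_def by auto
  then have "last (walk_edges ws) \<in> set (walk_edges ws)" by simp
  then show "last (walk_edges ws) \<in> E" "hgt e \<le> hgt (last (walk_edges ws)) + s * D"
    using assms \<open>set (walk_edges ws) \<subseteq> E\<close> unfolding admissible_def by auto
  show "last ws \<in> last (walk_edges ws)" by (rule last_mem_last_walk_edge) fact
qed

lemma frontier_subset: "frontier s \<subseteq> V"
proof
  fix w assume "w \<in> frontier s"
  then obtain ws where "admissible s ws" "w = last ws" unfolding frontier_def by auto
  then have "last (walk_edges ws) \<in> E" "w \<in> last (walk_edges ws)"
    using admissible_last_edge by auto
  then show "w \<in> V" using simple_graph_edge_subset[OF simple] by blast
qed

lemma finite_frontier: "finite (frontier s)"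
  using finite_subset[OF frontier_subset finite_V] .

lemma finite_extension_edges: "finite (extension_edges s)"
  using simple_graph_finite_edges[OF simple] unfolding extension_edges_def by simp

lemma subgraph_extension_edges: "subgraph (\<Union>(extension_edges s)) (extension_edges s) V E"
  using simple_graph_edge_subset[OF simple] unfolding subgraph_def extension_edges_def by auto

lemma card_frontier_0: "2 \<le> card (frontier 0)"
proof -
  obtain u v where "u \<in> V" "v \<in> V" "u \<noteq> v" "e = {u, v}"
    by (rule simple_graph_edgeD[OF simple e_edge])
  moreover have "walk_edges [u, v] = [{u, v}]" "walk_edges [v, u] = [{u, v}]"
    unfolding walk_edges_def by (simp_all add: insert_commute)
  ultimately have "admissible 0 [u, v]" "admissible 0 [v, u]"
    using e_edge unfolding admissible_def increasing_trail_def trail_length_def by simp_all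
  then have "{last [v, u], last [u, v]} \<subseteq> frontier 0"
    unfolding frontier_def by blast
  then have "{u, v} \<subseteq> frontier 0" by simp
  moreover have "card {u, v} = 2" using \<open>u \<noteq> v\<close> by simp
  ultimately show ?thesis using card_mono[OF finite_frontier] by metis
qed

lemma extension_edge_extends:
  assumes "g \<in> extension_edges s"
  obtains ws y where "admissible s ws" "g = {last ws, y}" "admissible (Suc s) (ws @ [y])"
    "last (walk_edges (ws @ [y])) = g"
proof -
  obtain ws where ws: "admissible s ws" "last ws \<in> g" "(last (walk_edges ws), g) \<in> leE"
      "g \<noteq> last (walk_edges ws)" "hgt e \<le> hgt g + Suc s * D" and "g \<in> E"
    using assms unfolding extension_edges_def by blast
  obtain a b where "g = {a, b}"
    using simple \<open>g \<in> E\<close> by (auto elim: simple_graph_edgeD)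
  then obtain y where y: "g = {last ws, y}"
    using \<open>last ws \<in> g\<close> by (auto simp: insert_commute)
  have trail: "increasing_trail E leE ws" and "walk_edges ws \<noteq> []"
    using ws(1) unfolding admissible_def increasing_trail_def by auto
  then have "ws \<noteq> []" by auto
  then have edges: "walk_edges (ws @ [y]) = walk_edges ws @ [g]"
    by (simp add: walk_edges_snoc y)
  have "increasing_trail E leE (ws @ [y])"
    using increasing_trail_snoc[OF linear trail] ws(3,4) \<open>g \<in> E\<close> y by simp
  moreover have "\<forall>g'\<in>set (walk_edges ws). hgt e \<le> hgt g' + Suc s * D"
    using ws(1) unfolding admissible_def by fastforce
  ultimately have "admissible (Suc s) (ws @ [y])"
    using ws(1,5) \<open>walk_edges ws \<noteq> []\<close> unfolding admissible_def trail_length_def edges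
    by simp
  then show ?thesis using that ws(1) y edges by simp
qed

lemma Union_extension_edges_subset:
  "\<Union>(extension_edges s) \<subseteq> frontier s \<union> frontier (Suc s)"
proof
  fix x assume "x \<in> \<Union>(extension_edges s)"
  then obtain g where "g \<in> extension_edges s" "x \<in> g" by auto
  then obtain ws y where "admissible s ws" "g = {last ws, y}" "admissible (Suc s) (ws @ [y])"
    using extension_edge_extends by metis
  then show "x \<in> frontier s \<union> frontier (Suc s)"
    using \<open>x \<in> g\<close> unfolding frontier_def by (auto intro!: image_eqI)
qed

lemma degree_extension_edges:
  assumes "Suc s * D < hgt e" "w \<in> frontier s"
  shows "D \<le> card {g\<in>extension_edges s. w \<in> g}"
proof -
  obtain ws where ws: "admissible s ws" "w = last ws"
    using assms(2) unfolding frontier_def by auto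
  define f where "f = last (walk_edges ws)"
  have f: "f \<in> E" "w \<in> f" "hgt e \<le> hgt f + s * D"
    using admissible_last_edge[OF ws(1)] ws(2) unfolding f_def by auto
  have "{hgt f - D..<hgt f} \<subseteq> hgt ` {g\<in>extension_edges s. w \<in> g}"
  proof
    fix i assume i: "i \<in> {hgt f - D..<hgt f}"
    have "1 \<le> i" "i < hgt f" "hgt e \<le> i + Suc s * D" using i f(3) assms(1) by auto
    then obtain g where "g \<in> E" "w \<in> g" "hgt g = i" "(f, g) \<in> leE" "g \<noteq> f"
      using exists_larger_edge_of_height[OF graph f(1,2)] by blast
    then have "g \<in> extension_edges s"
      using ws \<open>hgt e \<le> i + Suc s * D\<close> unfolding extension_edges_def f_def by blast
    then show "i \<in> hgt ` {g\<in>extension_edges s. w \<in> g}"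
      using \<open>w \<in> g\<close> \<open>hgt g = i\<close> by blast
  qed
  then have "card {hgt f - D..<hgt f} \<le> card (hgt ` {g\<in>extension_edges s. w \<in> g})"
    using finite_extension_edges by (intro card_mono) auto
  also have "\<dots> \<le> card {g\<in>extension_edges s. w \<in> g}"
    by (rule card_image_le) (simp add: finite_extension_edges)
  finally have "card {hgt f - D..<hgt f} \<le> card {g\<in>extension_edges s. w \<in> g}" .
  moreover have "D \<le> hgt f" using f(3) assms(1) by simp
  ultimately show ?thesis by simp
qed

lemma card_frontier_Suc_gt:
  fixes h :: real
  assumes "0 < h" "3 * h \<le> D" "Suc s * D < hgt e" "frontier s \<noteq> {}"
    and "avg_degree (\<Union>(extension_edges s)) (extension_edges s) < h"
  shows "2 * card (frontier s) < card (frontier (Suc s))"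
proof -
  let ?A = "extension_edges s" and ?W = "frontier s" and ?W' = "frontier (Suc s)"
  have "\<forall>g\<in>?A. finite g \<and> card g \<le> 2"
    using simple_graph_card_edge[OF simple] unfolding extension_edges_def by (auto intro: card_ge_0_finite)
  then have incidences: "D * card ?W \<le> 2 * card ?A"
    using double_counting_le[OF finite_extension_edges finite_frontier]
      degree_extension_edges[OF assms(3)] by blast
  have "0 < D" using assms(1,2) by simp
  obtain w where "w \<in> ?W" using assms(4) by auto
  then have "0 < card {g\<in>?A. w \<in> g}"
    using degree_extension_edges[OF assms(3)] \<open>0 < D\<close> by (meson less_le_trans)
  then obtain g where "g \<in> ?A" "w \<in> g"
    by (metis (no_types, lifting) card_gt_0_iff mem_Collect_eq ex_in_conv)
  have "finite (?W \<union> ?W')" using finite_frontier by simp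
  then have "finite (\<Union>?A)" using Union_extension_edges_subset by (rule finite_subset[rotated])
  have "card (\<Union>?A) \<le> card ?W + card ?W'"
    using card_mono[OF \<open>finite (?W \<union> ?W')\<close> Union_extension_edges_subset]
      card_Un_le[of ?W ?W'] by linarith
  moreover have "\<Union>?A \<noteq> {}" using \<open>g \<in> ?A\<close> \<open>w \<in> g\<close> by auto
  ultimately have "0 < card (\<Union>?A)" using \<open>finite (\<Union>?A)\<close> by (simp add: card_gt_0_iff)
  then have "2 * card ?A < h * card (\<Union>?A)"
    using assms(5) unfolding avg_degree_def by (simp add: field_simps)
  have "h * (3 * card ?W) \<le> D * card ?W"
    using assms(2) by (simp add: mult_right_mono flip: mult.assoc)
  also have "\<dots> \<le> 2 * card ?A"
    using incidences by (simp flip: of_nat_mult)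
  also have "\<dots> < h * card (\<Union>?A)" by fact
  also have "\<dots> \<le> h * (card ?W + card ?W')"
    using \<open>card (\<Union>?A) \<le> card ?W + card ?W'\<close> assms(1) by (simp flip: of_nat_add)
  finally have "real (3 * card ?W) < real (card ?W + card ?W')"
    using assms(1) by (simp add: mult_less_cancel_left_pos)
  then show ?thesis by simp
qed

lemma dense_extension_edges_exist:
  fixes h :: real
  assumes "0 < h" "3 * h \<le> D" "T * D < hgt e" "card V < 2 ^ Suc T"
  shows "\<exists>s\<le>T. h \<le> avg_degree (\<Union>(extension_edges s)) (extension_edges s)"
proof (rule ccontr)
  assume "\<not> ?thesis"
  then have sparse: "avg_degree (\<Union>(extension_edges s)) (extension_edges s) < h" if "s \<le> T" for s
    using that by force
  have "2 ^ Suc s \<le> card (frontier s)" if "s \<le> T" for s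
    using that
  proof (induction s)
    case 0
    then show ?case using card_frontier_0 by simp
  next
    case (Suc s)
    then have "2 ^ Suc s \<le> card (frontier s)" by simp
    then have "frontier s \<noteq> {}" by auto
    moreover have "Suc s * D < hgt e"
      using Suc.prems assms(3) by (meson le_less_trans mult_le_mono1)
    ultimately have "2 * card (frontier s) < card (frontier (Suc s))"
      using card_frontier_Suc_gt[OF assms(1,2)] sparse Suc.prems by simp
    then show ?case using \<open>2 ^ Suc s \<le> card (frontier s)\<close> by simp
  qed
  then have "2 ^ Suc T \<le> card (frontier T)" by simp
  also have "\<dots> \<le> card V" using card_mono[OF finite_V frontier_subset] .
  finally show False using assms(4) by simp
qed

lemma extension_edge_trail:
  assumes "f \<in> extension_edges s"
  obtains ws where "increasing_trail E leE ws" "hd (walk_edges ws) = e"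
    "last (walk_edges ws) = f" "trail_length ws = s + 2"
    "\<forall>g\<in>set (walk_edges ws). real (hgt e) - real (Suc s * D) \<le> real (hgt g)"
proof -
  obtain ws y where "admissible (Suc s) (ws @ [y])" "last (walk_edges (ws @ [y])) = f"
    using extension_edge_extends[OF assms] by metis
  moreover have "real (hgt e) \<le> real (hgt g) + real (Suc s * D)"
    if "admissible (Suc s) ws'" "g \<in> set (walk_edges ws')" for ws' g
  proof -
    have "hgt e \<le> hgt g + Suc s * D" using that unfolding admissible_def by blast
    then show ?thesis by (simp only: flip: of_nat_add of_nat_le_iff)
  qed
  ultimately show ?thesis
    using that[of "ws @ [y]"] unfolding admissible_def by fastforce
qed

end

lemma less_two_power_Suc_floor_log:
  fixes n :: nat
  assumes "0 < n"
  shows "n < 2 ^ Suc (nat \<lfloor>log 2 n\<rfloor>)"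
proof (rule ccontr)
  assume "\<not> ?thesis"
  then have "real (Suc (nat \<lfloor>log 2 n\<rfloor>)) \<le> log 2 n"
    by (intro le_log2_of_power) simp
  moreover have "0 \<le> log 2 n" using assms by simp
  ultimately show False by linarith
qed

lemma trail_budget:
  fixes h L :: real
  assumes "1 \<le> h" "1 \<le> L"
  defines "D \<equiv> nat \<lceil>3 * h\<rceil>" and "T \<equiv> nat \<lfloor>L\<rfloor>"
  shows "3 * h \<le> D" "real (T * D) < 21 * h * L" "real (Suc T * D) \<le> 7 * h * (L + 2)"
    "real T \<le> L"
proof -
  show "3 * h \<le> D" "real T \<le> L" unfolding D_def T_def using assms(1,2) by linarith+
  have "real D \<le> 4 * h" unfolding D_def using assms(1) by linarith
  then have "real T * real D \<le> L * (4 * h)" "(real T + 1) * real D \<le> (L + 1) * (4 * h)"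
    using \<open>real T \<le> L\<close> assms(1) by (intro mult_mono; simp)+
  then have "real (T * D) \<le> L * (4 * h)" "real (Suc T * D) \<le> (L + 1) * (4 * h)"
    by (simp_all add: algebra_simps)
  moreover have "0 < h * L" using assms(1,2) by simp
  moreover have "L * (4 * h) = 4 * (h * L)" "(L + 1) * (4 * h) = 4 * (h * L) + 4 * h"
    "21 * h * L = 21 * (h * L)" "7 * h * (L + 2) = 7 * (h * L) + 14 * h"
    by (simp_all add: algebra_simps)
  ultimately show "real (T * D) < 21 * h * L" "real (Suc T * D) \<le> 7 * h * (L + 2)"
    using assms(1) by linarith+
qed

theorem lemma4p2:
  fixes V :: "'a set" and E :: "'a set set"
    and leE :: "('a set \<times> 'a set) set" and leV :: "('a \<times> 'a) set"
    and n :: nat and h :: real and e :: "'a set"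
  assumes "ordered_graph V E leE leV"
    and "card V \<le> n"
    and "h \<ge> 1"
    and "e \<in> E"
    and "real (height V E leE leV e) \<ge> 21 * h * log 2 n"
  shows "\<exists>VH EH. subgraph VH EH V E \<and> avg_degree VH EH \<ge> h \<and>
           (\<forall>f\<in>EH. \<exists>ws. increasing_trail E leE ws \<and>
               hd (walk_edges ws) = e \<and> last (walk_edges ws) = f \<and>
               real (trail_length ws) \<le> 2 + log 2 n \<and>
               (\<forall>g\<in>set (walk_edges ws).
                  real (height V E leE leV g)
                    \<ge> real (height V E leE leV e) - 7 * h * (log 2 n + 2)))"
proof -
  interpret trail_growth V E leE leV e "nat \<lceil>3 * h\<rceil>"
    using assms(1,4) by unfold_locales
  let ?D = "nat \<lceil>3 * h\<rceil>" and ?A = extension_edges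
  define T where "T = nat \<lfloor>log 2 n\<rfloor>"
  have "2 \<le> n" using two_le_card_V assms(2) by simp
  then have "1 \<le> log 2 n" by simp
  note budget = trail_budget[OF assms(3) this, folded T_def]
  have "T * ?D < hgt e" using budget(2) assms(5) by linarith
  moreover have "card V < 2 ^ Suc T"
    using assms(2) less_two_power_Suc_floor_log[of n] \<open>2 \<le> n\<close> unfolding T_def by simp
  ultimately obtain s where "s \<le> T" and dense: "h \<le> avg_degree (\<Union>(?A s)) (?A s)"
    using dense_extension_edges_exist[of h T] budget(1) assms(3) by auto
  have "Suc s * ?D \<le> Suc T * ?D" using \<open>s \<le> T\<close> by simp
  then have drop: "real (Suc s * ?D) \<le> 7 * h * (log 2 n + 2)"
    using budget(3) by (meson of_nat_le_iff order_trans)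
  have length: "real (s + 2) \<le> 2 + log 2 n" using budget(4) \<open>s \<le> T\<close> by simp
  show ?thesis
  proof (intro exI[of _ "\<Union>(?A s)"] exI[of _ "?A s"] conjI ballI)
    show "subgraph (\<Union>(?A s)) (?A s) V E" by (rule subgraph_extension_edges)
    show "h \<le> avg_degree (\<Union>(?A s)) (?A s)" by (fact dense)
    fix f assume "f \<in> ?A s"
    then obtain ws where "increasing_trail E leE ws" "hd (walk_edges ws) = e"
      "last (walk_edges ws) = f" "trail_length ws = s + 2"
      "\<forall>g\<in>set (walk_edges ws). real (hgt e) - real (Suc s * ?D) \<le> real (hgt g)"
      by (rule extension_edge_trail)
    with drop length show "\<exists>ws. increasing_trail E leE ws \<and>
        hd (walk_edges ws) = e \<and> last (walk_edges ws) = f \<and>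
        real (trail_length ws) \<le> 2 + log 2 n \<and>
        (\<forall>g\<in>set (walk_edges ws). real (hgt e) - 7 * h * (log 2 n + 2) \<le> real (hgt g))"
      by (intro exI[of _ ws]) fastforce
  qed
qed

end
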